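(* Every finite-dimensional admissible Poisson algebra $(\mathcal{P},\cdot)$ which is not a nilalgebra contains a principal idempotent, i.e. a non-zero idempotent $e$ such that there is no non-zero idempotent $u$ with $u\cdot e=e\cdot u=0$.
   Context: $\mathbb{K}$ is a field of characteristic different from $2$ and $3$. Associator: $A(X,Y,Z)=(X\cdot Y)\cdot Z-X\cdot(Y\cdot Z)$. An admissible Poisson algebra is a $\mathbb{K}$-vector space $\mathcal{P}$ with a bilinear product $\cdot$ satisfying $3A(X,Y,Z)=(X\cdot Z)\cdot Y+(Y\cdot Z)\cdot X-(Y\cdot X)\cdot Z-(Z\cdot X)\cdot Y$ for all $X,Y,Z$. Idempotent: $e\cdot e=e$. Powers: $X^1=X$, $X^{i+1}=X\cdot X^i$; $\mathcal{P}$ is a nilalgebra if every $X$ satisfies $X^r=0$ for some $r$. *)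

theory Defs
  imports Complex_Main
begin

definition assoc :: "('v \<Rightarrow> 'v \<Rightarrow> 'v) \<Rightarrow> 'v \<Rightarrow> 'v \<Rightarrow> 'v \<Rightarrow> 'v::ab_group_add" where
  "assoc mult x y z = mult (mult x y) z - mult x (mult y z)"

definition fin_dim :: "('k::field \<Rightarrow> 'v::ab_group_add \<Rightarrow> 'v) \<Rightarrow> bool" where
  "fin_dim scale \<longleftrightarrow> (\<exists>B. finite B \<and> module.span scale B = UNIV)"

definition bilinear_prod :: "('k::field \<Rightarrow> 'v::ab_group_add \<Rightarrow> 'v) \<Rightarrow> ('v \<Rightarrow> 'v \<Rightarrow> 'v) \<Rightarrow> bool" where
  "bilinear_prod scale mult \<longleftrightarrow>
     (\<forall>x. Vector_Spaces.linear scale scale (mult x)) \<and>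
     (\<forall>y. Vector_Spaces.linear scale scale (\<lambda>x. mult x y))"

definition admissible_poisson :: "('k::field \<Rightarrow> 'v::ab_group_add \<Rightarrow> 'v) \<Rightarrow> ('v \<Rightarrow> 'v \<Rightarrow> 'v) \<Rightarrow> bool" where
  "admissible_poisson scale mult \<longleftrightarrow>
     vector_space scale \<and> bilinear_prod scale mult \<and>
     (\<forall>x y z. scale 3 (assoc mult x y z) =
        mult (mult x z) y + mult (mult y z) x - mult (mult y x) z - mult (mult z x) y)"

text \<open>Powers: pw mult x 1 = x, pw mult x (i+1) = x * pw mult x i (pw mult x 0 is unused).\<close>
fun pw :: "('v \<Rightarrow> 'v \<Rightarrow> 'v) \<Rightarrow> 'v \<Rightarrow> nat \<Rightarrow> 'v::zero" where
  "pw mult x 0 = 0"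
| "pw mult x (Suc 0) = x"
| "pw mult x (Suc (Suc n)) = mult x (pw mult x (Suc n))"

definition nilalgebra :: "('v::zero \<Rightarrow> 'v \<Rightarrow> 'v) \<Rightarrow> bool" where
  "nilalgebra mult \<longleftrightarrow> (\<forall>x. \<exists>r\<ge>1. pw mult x r = 0)"

definition idempotent :: "('v \<Rightarrow> 'v \<Rightarrow> 'v) \<Rightarrow> 'v \<Rightarrow> bool" where
  "idempotent mult e \<longleftrightarrow> mult e e = e"

definition principal_idempotent :: "('v::zero \<Rightarrow> 'v \<Rightarrow> 'v) \<Rightarrow> 'v \<Rightarrow> bool" where
  "principal_idempotent mult e \<longleftrightarrow> e \<noteq> 0 \<and> idempotent mult e \<and>
     \<not> (\<exists>u. u \<noteq> 0 \<and> idempotent mult u \<and> mult u e = 0 \<and> mult e u = 0)"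

end

theory Submission
  imports Defs
begin

(* The symmetrised product x o y = (xy + yx)/2 of an admissible Poisson algebra is commutative
   and associative, and the commutator [x, y] = xy - yx is a derivation of it: three times each
   of these identities is a signed sum of instances of the defining identity. Hence [x, x^n] = 0,
   the powers of x for both products coincide, and the theorem reduces to finite-dimensional
   commutative associative algebras. There, for non-nilpotent x the principal ideals x^n P
   decrease and stabilise, so a = x^(m+1) lies in a^2 P, say a = a^2 y, and then e = a y is a
   non-zero idempotent. An idempotent e whose ideal e P has maximal dimension is principal: for
   an orthogonal idempotent u, e + u is idempotent and e P is contained in (e + u) P, so the two
   ideals coincide and u = e u = 0. *)

locale bilinear_algebra = vector_space scale
  for scale :: "'k::field \<Rightarrow> 'v::ab_group_add \<Rightarrow> 'v" +
  fixes mult :: "'v \<Rightarrow> 'v \<Rightarrow> 'v"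
  assumes bilinear: "bilinear_prod scale mult"
begin

lemma linear_right: "module_hom scale scale (mult x)"
  using bilinear unfolding bilinear_prod_def by (simp add: module_hom_iff_linear)

lemma linear_left: "module_hom scale scale (\<lambda>y. mult y x)"
  using bilinear unfolding bilinear_prod_def by (simp add: module_hom_iff_linear)

lemmas mult_add_right = module_hom.add[OF linear_right]
  and mult_add_left = module_hom.add[OF linear_left]
  and mult_diff_right = module_hom.diff[OF linear_right]
  and mult_diff_left = module_hom.diff[OF linear_left]
  and mult_scale_right = module_hom.scale[OF linear_right]
  and mult_scale_left = module_hom.scale[OF linear_left]
  and mult_zero_right [simp] = module_hom.zero[OF linear_right]
  and mult_zero_left [simp] = module_hom.zero[OF linear_left]

lemmas mult_linear = mult_add_right mult_add_left mult_diff_right mult_diff_left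
  mult_scale_right mult_scale_left

lemma subspace_range_mult: "subspace (range (mult a))"
  using module_hom.subspace_image[OF linear_right subspace_UNIV] .

end

locale comm_assoc_algebra = bilinear_algebra +
  assumes mult_commute: "mult x y = mult y x"
    and mult_assoc: "mult (mult x y) z = mult x (mult y z)"
begin

lemma pw_add:
  assumes "m \<ge> 1" and "n \<ge> 1"
  shows "pw mult x (m + n) = mult (pw mult x m) (pw mult x n)"
  using assms(1)
proof (induction m rule: dec_induct)
  case base
  then show ?case
    using assms(2) by (cases n) auto
next
  case (step m)
  then obtain k where "m = Suc k" by (cases m) auto
  then show ?case
    using step.IH by (simp add: mult_assoc)
qed

lemma range_mult_subset: "mult f e = e \<Longrightarrow> range (mult e) \<subseteq> range (mult f)"
  by (metis image_subset_iff mult_assoc rangeI)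

lemma idempotent_mult_absorbs:
  assumes "idempotent mult e" and "v \<in> range (mult e)"
  shows "mult e v = v"
  using assms by (metis idempotent_def mult_assoc rangeE)

lemma idempotent_add_orthogonal:
  assumes "idempotent mult e" and "idempotent mult u" and "mult e u = 0"
  shows "idempotent mult (e + u)"
  using assms by (simp add: idempotent_def mult_add_left mult_add_right mult_commute[of u e])

lemma idempotent_if_mem_range_square:
  assumes a: "a \<in> range (mult (mult a a))" and "a \<noteq> 0"
  shows "\<exists>e. e \<noteq> 0 \<and> idempotent mult e"
proof -
  obtain y where y: "a = mult (mult a a) y"
    using a by blast
  define e where "e = mult a y"
  have "mult e e = mult (mult (mult a a) y) y"
    unfolding e_def by (metis mult_assoc mult_commute)
  then have "idempotent mult e"
    by (simp add: idempotent_def e_def flip: y)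
  moreover have "mult a e = mult (mult a a) y"
    by (simp add: e_def mult_assoc)
  then have "mult a e = a"
    using y by simp
  then have "e \<noteq> 0"
    using \<open>a \<noteq> 0\<close> by auto
  ultimately show ?thesis
    by blast
qed

end

locale fd_comm_assoc_algebra =
  comm_assoc_algebra scale mult + finite_dimensional_vector_space scale Basis
  for scale :: "'k::field \<Rightarrow> 'v::ab_group_add \<Rightarrow> 'v" and mult and Basis
begin

lemma idempotent_if_not_nilpotent:
  assumes "\<forall>n\<ge>1. pw mult x n \<noteq> 0"
  shows "\<exists>e. e \<noteq> 0 \<and> idempotent mult e"
proof -
  define W where "W n = range (mult (pw mult x n))" for n
  obtain m where "m \<ge> 1"
    and m_min: "\<And>n. n \<ge> 1 \<Longrightarrow> dim (W m) \<le> dim (W n)"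
    using ex_has_least_nat[of "\<lambda>n. n \<ge> 1" 1 "\<lambda>n. dim (W n)"] by auto
  have W_antimono: "W (m + k) \<subseteq> W m" if "k \<ge> 1" for k
  proof
    fix v assume "v \<in> W (m + k)"
    then obtain y where "v = mult (pw mult x (m + k)) y"
      unfolding W_def by blast
    then have "v = mult (pw mult x m) (mult (pw mult x k) y)"
      using \<open>m \<ge> 1\<close> that by (simp add: pw_add mult_assoc)
    then show "v \<in> W m"
      unfolding W_def by (rule range_eqI)
  qed
  define a where "a = pw mult x (m + 1)"
  have "a = mult (pw mult x m) (pw mult x 1)"
    unfolding a_def using \<open>m \<ge> 1\<close> by (rule pw_add) simp
  then have "a \<in> W m"
    unfolding W_def by (rule range_eqI)
  also have "W m = W (m + (m + 2))"
  proof (rule sym, rule subspace_dim_equal)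
    show "W (m + (m + 2)) \<subseteq> W m" by (rule W_antimono) simp
    show "dim (W m) \<le> dim (W (m + (m + 2)))" by (rule m_min) simp
  qed (simp_all add: W_def subspace_range_mult)
  also have "W (m + (m + 2)) = range (mult (mult a a))"
    unfolding W_def a_def using \<open>m \<ge> 1\<close> by (simp add: pw_add[symmetric])
  finally show ?thesis
    using assms by (intro idempotent_if_mem_range_square) (auto simp: a_def)
qed

lemma principal_idempotent_exists:
  assumes "e\<^sub>0 \<noteq> 0" and "idempotent mult e\<^sub>0"
  shows "\<exists>e. principal_idempotent mult e"
proof -
  let ?Q = "\<lambda>e. e \<noteq> 0 \<and> idempotent mult e"
  have "\<forall>e. ?Q e \<longrightarrow> dim (range (mult e)) < Suc dimension"
    using dim_subset_UNIV by (simp add: less_Suc_eq_le)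
  then obtain e where e: "?Q e"
    and e_max: "\<And>f. ?Q f \<Longrightarrow> dim (range (mult f)) \<le> dim (range (mult e))"
    using ex_has_greatest_nat[of ?Q e\<^sub>0 "\<lambda>e. dim (range (mult e))" "Suc dimension"]
      assms by blast
  have "u = 0" if u: "idempotent mult u" "mult u e = 0" "mult e u = 0" for u
  proof (rule ccontr)
    assume "u \<noteq> 0"
    have fe: "mult (e + u) e = e" and fu: "mult (e + u) u = u"
      using e u by (simp_all add: idempotent_def mult_add_left)
    have "e + u \<noteq> 0"
    proof
      assume "e + u = 0"
      with fu \<open>u \<noteq> 0\<close> show False by simp
    qed
    moreover have "idempotent mult (e + u)"
      using e u by (simp add: idempotent_add_orthogonal)
    ultimately have "dim (range (mult (e + u))) \<le> dim (range (mult e))"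
      by (intro e_max conjI)
    then have "range (mult e) = range (mult (e + u))"
      by (rule subspace_dim_equal[OF subspace_range_mult subspace_range_mult
            range_mult_subset[OF fe]])
    moreover have "u \<in> range (mult (e + u))"
      using fu[symmetric] by (rule range_eqI)
    ultimately have "u \<in> range (mult e)"
      by simp
    then have "mult e u = u"
      using e by (blast intro: idempotent_mult_absorbs)
    with u \<open>u \<noteq> 0\<close> show False by simp
  qed
  with e show ?thesis
    unfolding principal_idempotent_def by blast
qed

end

lemma (in vector_space) finite_dimensional_if_fin_dim:
  assumes "fin_dim scale"
  obtains B where "finite_dimensional_vector_space scale B"
proof -
  obtain S where "finite S" and S: "span S = UNIV"
    using assms unfolding fin_dim_def by blast
  obtain B where "independent B" and B: "span B = UNIV"
    using basis_exists[of UNIV] by (metis span_UNIV subset_antisym top_greatest span_mono)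
  have "finite B"
    using independent_span_bound[OF \<open>finite S\<close> \<open>independent B\<close>] S by blast
  with \<open>independent B\<close> B show ?thesis
    by (intro that) unfold_locales
qed

locale admissible_poisson_algebra = bilinear_algebra scale mult
  for scale :: "'k::field \<Rightarrow> 'v::ab_group_add \<Rightarrow> 'v" and mult +
  assumes admissible: "scale 3 (assoc mult x y z) =
      mult (mult x z) y + mult (mult y z) x - mult (mult y x) z - mult (mult z x) y"
    and two_neq_zero: "(2::'k) \<noteq> 0" and three_neq_zero: "(3::'k) \<noteq> 0"
begin

lemma scale_three: "scale 3 v = v + v + v"
proof -
  have "scale (1 + 1 + 1) v = v + v + v"
    by (simp only: scale_left_distrib scale_one)
  then show ?thesis by simp
qed

lemma three_torsion_free:
  fixes v :: 'v
  assumes "v + v + v = 0"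
  shows "v = 0"
proof -
  have "scale 3 v = 0"
    using assms by (simp only: scale_three)
  with three_neq_zero show ?thesis
    by simp
qed

lemma half_double: "scale (inverse 2) (v + v) = v"
proof -
  have "v + v = scale 2 v"
    using scale_left_distrib[of 1 1 v] by simp
  then show ?thesis
    using two_neq_zero by simp
qed

definition admissible_defect :: "'v \<Rightarrow> 'v \<Rightarrow> 'v \<Rightarrow> 'v" where
  "admissible_defect x y z = scale 3 (assoc mult x y z) -
     (mult (mult x z) y + mult (mult y z) x - mult (mult y x) z - mult (mult z x) y)"

lemma admissible_defect_eq_0: "admissible_defect x y z = 0"
  by (simp add: admissible_defect_def admissible)

lemma anticommutator_assoc:
  "mult (mult x y + mult y x) z + mult z (mult x y + mult y x) =
   mult x (mult y z + mult z y) + mult (mult y z + mult z y) x"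
proof -
  define D where "D = mult (mult x y + mult y x) z + mult z (mult x y + mult y x) -
      (mult x (mult y z + mult z y) + mult (mult y z + mult z y) x)"
  have "D + D + D = admissible_defect x y z + admissible_defect x z y
      - admissible_defect z x y - admissible_defect z y x"
    by (simp add: D_def admissible_defect_def assoc_def scale_three mult_linear algebra_simps)
  then have "D + D + D = 0"
    by (simp add: admissible_defect_eq_0)
  then have "D = 0"
    by (rule three_torsion_free)
  then show ?thesis
    by (simp add: D_def)
qed

lemma commutator_derivation:
  "mult x (mult y z + mult z y) - mult (mult y z + mult z y) x =
   mult (mult x y - mult y x) z + mult z (mult x y - mult y x) +
   (mult y (mult x z - mult z x) + mult (mult x z - mult z x) y)"
proof -
  define D where "D = mult x (mult y z + mult z y) - mult (mult y z + mult z y) x -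
      (mult (mult x y - mult y x) z + mult z (mult x y - mult y x) +
       (mult y (mult x z - mult z x) + mult (mult x z - mult z x) y))"
  have "D + D + D = - admissible_defect x y z - admissible_defect x z y
      + admissible_defect y x z - admissible_defect y z x
      + admissible_defect z x y - admissible_defect z y x"
    by (simp add: D_def admissible_defect_def assoc_def scale_three mult_linear algebra_simps)
  then have "D + D + D = 0"
    by (simp add: admissible_defect_eq_0)
  then have "D = 0"
    by (rule three_torsion_free)
  then show ?thesis
    by (simp add: D_def)
qed

definition sym_prod :: "'v \<Rightarrow> 'v \<Rightarrow> 'v" where
  "sym_prod x y = scale (inverse 2) (mult x y + mult y x)"

definition bracket :: "'v \<Rightarrow> 'v \<Rightarrow> 'v" where
  "bracket x y = mult x y - mult y x"

lemma sym_prod_commute: "sym_prod x y = sym_prod y x"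
  unfolding sym_prod_def by (simp add: add.commute)

lemma sym_prod_self: "sym_prod x x = mult x x"
  unfolding sym_prod_def by (rule half_double)

lemma bracket_self: "bracket x x = 0"
  unfolding bracket_def by simp

lemma mult_eq_sym_prod_plus_bracket:
  "mult x y = sym_prod x y + scale (inverse 2) (bracket x y)"
proof -
  have "sym_prod x y + scale (inverse 2) (bracket x y) =
      scale (inverse 2) ((mult x y + mult y x) + (mult x y - mult y x))"
    unfolding sym_prod_def bracket_def by (simp only: scale_right_distrib)
  also have "\<dots> = scale (inverse 2) (mult x y + mult x y)"
    by (rule arg_cong[where f = "scale (inverse 2)"]) simp
  also have "\<dots> = mult x y"
    by (rule half_double)
  finally show ?thesis ..
qed

lemma sym_prod_assoc: "sym_prod (sym_prod x y) z = sym_prod x (sym_prod y z)"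
proof -
  have "sym_prod (sym_prod x y) z = scale (inverse 2 * inverse 2)
      (mult (mult x y + mult y x) z + mult z (mult x y + mult y x))"
    unfolding sym_prod_def
    by (simp only: mult_scale_left mult_scale_right scale_scale scale_right_distrib[symmetric])
  also have "\<dots> = scale (inverse 2 * inverse 2)
      (mult x (mult y z + mult z y) + mult (mult y z + mult z y) x)"
    by (simp only: anticommutator_assoc)
  also have "\<dots> = sym_prod x (sym_prod y z)"
    unfolding sym_prod_def
    by (simp only: mult_scale_left mult_scale_right scale_scale scale_right_distrib[symmetric])
  finally show ?thesis .
qed

lemma bracket_sym_prod_right:
  "bracket x (sym_prod y z) = sym_prod (bracket x y) z + sym_prod y (bracket x z)"
proof -
  have "bracket x (sym_prod y z) =
      scale (inverse 2) (mult x (mult y z + mult z y) - mult (mult y z + mult z y) x)"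
    unfolding sym_prod_def bracket_def
    by (simp only: mult_scale_left mult_scale_right scale_right_diff_distrib[symmetric])
  also have "\<dots> = sym_prod (bracket x y) z + sym_prod y (bracket x z)"
    unfolding sym_prod_def bracket_def commutator_derivation
    by (simp only: scale_right_distrib[symmetric])
  finally show ?thesis .
qed

sublocale sym_alg: comm_assoc_algebra scale sym_prod
proof
  have "Vector_Spaces.linear scale scale (\<lambda>y. sym_prod x y)" for x
    unfolding Vector_Spaces.linear_iff sym_prod_def
    by (simp add: vector_space_axioms mult_linear scale_right_distrib add_ac mult.commute)
  then show "bilinear_prod scale sym_prod"
    unfolding bilinear_prod_def by (simp add: sym_prod_commute)
qed (fact sym_prod_commute sym_prod_assoc)+

lemma bracket_pw_sym_prod: "bracket x (pw sym_prod x n) = 0"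
proof (induction sym_prod x n rule: pw.induct)
  case (3 x n)
  then show ?case by (simp add: bracket_sym_prod_right bracket_self)
qed (simp_all add: bracket_def)

lemma pw_mult_eq_pw_sym_prod: "pw mult x n = pw sym_prod x n"
proof (induction sym_prod x n rule: pw.induct)
  case (3 x n)
  have "pw mult x (Suc (Suc n)) = mult x (pw sym_prod x (Suc n))"
    by (simp add: 3)
  also have "\<dots> = pw sym_prod x (Suc (Suc n))"
    by (simp add: mult_eq_sym_prod_plus_bracket bracket_pw_sym_prod)
  finally show ?case .
qed simp_all

lemma principal_idempotent_if_sym_prod:
  assumes "principal_idempotent sym_prod e"
  shows "principal_idempotent mult e"
proof -
  have "sym_prod u v = 0" if "mult u v = 0" and "mult v u = 0" for u v
    using that by (simp add: sym_prod_def)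
  then show ?thesis
    using assms unfolding principal_idempotent_def idempotent_def sym_prod_self by blast
qed

end

theorem mainTheorem9:
  fixes scale :: "'k::field \<Rightarrow> 'v::ab_group_add \<Rightarrow> 'v"
    and mult :: "'v \<Rightarrow> 'v \<Rightarrow> 'v"
  assumes char2: "(2::'k) \<noteq> 0" and char3: "(3::'k) \<noteq> 0"
    and adm: "admissible_poisson scale mult"
    and fd: "fin_dim scale"
    and notnil: "\<not> nilalgebra mult"
  shows "\<exists>e. principal_idempotent mult e"
proof -
  interpret admissible_poisson_algebra scale mult
    using adm char2 char3
    unfolding admissible_poisson_def admissible_poisson_algebra_def
      admissible_poisson_algebra_axioms_def bilinear_algebra_def bilinear_algebra_axioms_def
    by blast
  obtain B where "finite_dimensional_vector_space scale B"
    using fd by (rule finite_dimensional_if_fin_dim)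
  then interpret fd: fd_comm_assoc_algebra scale sym_prod B
    by (intro fd_comm_assoc_algebra.intro sym_alg.comm_assoc_algebra_axioms)
  obtain x where "\<forall>n\<ge>1. pw sym_prod x n \<noteq> 0"
    using notnil unfolding nilalgebra_def pw_mult_eq_pw_sym_prod by blast
  then obtain e where "e \<noteq> 0" and "idempotent sym_prod e"
    using fd.idempotent_if_not_nilpotent by blast
  then obtain e where "principal_idempotent sym_prod e"
    using fd.principal_idempotent_exists by blast
  then show ?thesis
    using principal_idempotent_if_sym_prod by blast
qed

end
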